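(* Fix $\lambda\ge 0$, an angular frequency $\omega>0$, an integer $n\ge 1$, layer thicknesses $d_1,\dots,d_{n-1}>0$, magnetic permeabilities $\mu_1,\dots,\mu_n>0$ and electrical conductivities $\sigma_1,\dots,\sigma_n>0$. For $k=1,\dots,n$ let $u_k=\sqrt{\lambda^2+\mathrm{i}\sigma_k\mu_k\omega}$ and $N_k=\dfrac{u_k}{\mathrm{i}\mu_k\omega}$, and define the surface admittances by $Y_n=N_n$ and, for $k=n-1,\dots,1$, $$Y_k=N_k\,\frac{Y_{k+1}+N_k\tanh(d_ku_k)}{N_k+Y_{k+1}\tanh(d_ku_k)},$$ regarded as functions of $\boldsymbol\sigma=(\sigma_1,\dots,\sigma_n)$. For $k=1,\dots,n-1$ set $$a_k=\frac{Y_{k+1}+N_k\tanh(d_ku_k)}{N_k+Y_{k+1}\tanh(d_ku_k)},\qquad b_k=\frac{1}{[N_k+Y_{k+1}\tanh(d_ku_k)]^2\cosh^2(d_ku_k)}.$$ Then the partial derivatives $Y'_{kj}=\partial Y_k/\partial\sigma_j$, $k,j=1,\dots,n$, satisfy $$Y'_{nn}=\frac{1}{2u_n},\qquad Y'_{nj}=0\ \ (j=1,\dots,n-1),$$ and, for $k=n-1,n-2,\dots,1$, $$Y'_{kj}=N_k^2\,b_k\,Y'_{k+1,j}\quad (j=n,n-1,\dots,k+1),$$ $$Y'_{kk}=\frac{a_k}{2u_k}+\frac{b_k}{2}\Big[N_k^2d_k-Y_{k+1}\Big(d_kY_{k+1}+\frac{1}{\mathrm{i}\mu_k\omega}\Big)\Big],$$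 $$Y'_{kj}=0\quad (j=k-1,k-2,\dots,1).$$
   Context: This models a layered soil with $n$ horizontal layers, the $k$-th having thickness $d_k$ (the bottom layer $n$ is infinitely thick), conductivity $\sigma_k$ and permeability $\mu_k$; $\mathrm{i}=\sqrt{-1}$ and the square root is the principal branch. $N_k$ is called the characteristic admittance and $Y_k$ the surface admittance at the top of layer $k$. All quantities depend on the auxiliary variable $\lambda$, suppressed from notation, and the derivatives are taken with respect to the conductivities with $\lambda,\omega,d_k,\mu_k$ fixed (assuming the denominators appearing are nonzero). *)

theory Defs
  imports Complex_Main
begin

text \<open>Layers are indexed 1..n; conductivities, permeabilities, thicknesses are
functions nat => real. lam = auxiliary variable lambda, w = angular frequency omega.\<close>

definition uk :: "real \<Rightarrow> real \<Rightarrow> (nat \<Rightarrow> real) \<Rightarrow> (nat \<Rightarrow> real) \<Rightarrow> nat \<Rightarrow> complex" where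
  "uk lam w mu sigma k = csqrt (complex_of_real (lam ^ 2) + \<i> * complex_of_real (sigma k * mu k * w))"

definition Nk :: "real \<Rightarrow> real \<Rightarrow> (nat \<Rightarrow> real) \<Rightarrow> (nat \<Rightarrow> real) \<Rightarrow> nat \<Rightarrow> complex" where
  "Nk lam w mu sigma k = uk lam w mu sigma k / (\<i> * complex_of_real (mu k * w))"

function Yk :: "real \<Rightarrow> real \<Rightarrow> (nat \<Rightarrow> real) \<Rightarrow> (nat \<Rightarrow> real) \<Rightarrow> nat \<Rightarrow> (nat \<Rightarrow> real) \<Rightarrow> nat \<Rightarrow> complex" where
  "Yk lam w d mu n sigma k =
     (if n \<le> k then Nk lam w mu sigma n
      else (let N = Nk lam w mu sigma k; Y1 = Yk lam w d mu n sigma (Suc k);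
                t = tanh (complex_of_real (d k) * uk lam w mu sigma k)
            in N * ((Y1 + N * t) / (N + Y1 * t))))"
  by pat_completeness auto
termination
  by (relation "measure (\<lambda>(lam, w, d, mu, n, sigma, k). n - k)") auto

declare Yk.simps [simp del]

definition ak :: "real \<Rightarrow> real \<Rightarrow> (nat \<Rightarrow> real) \<Rightarrow> (nat \<Rightarrow> real) \<Rightarrow> nat \<Rightarrow> (nat \<Rightarrow> real) \<Rightarrow> nat \<Rightarrow> complex" where
  "ak lam w d mu n sigma k =
     (let N = Nk lam w mu sigma k; Y1 = Yk lam w d mu n sigma (Suc k);
          t = tanh (complex_of_real (d k) * uk lam w mu sigma k)
      in (Y1 + N * t) / (N + Y1 * t))"

definition bk :: "real \<Rightarrow> real \<Rightarrow> (nat \<Rightarrow> real) \<Rightarrow> (nat \<Rightarrow> real) \<Rightarrow> nat \<Rightarrow> (nat \<Rightarrow> real) \<Rightarrow> nat \<Rightarrow> complex" where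
  "bk lam w d mu n sigma k =
     (let N = Nk lam w mu sigma k; Y1 = Yk lam w d mu n sigma (Suc k);
          x = complex_of_real (d k) * uk lam w mu sigma k
      in 1 / ((N + Y1 * tanh x) ^ 2 * (cosh x) ^ 2))"

end

theory Submission
  imports Defs "HOL-Analysis.Analysis"
begin

text \<open>
  \<open>Y\<^sub>k\<close> depends only on \<open>\<sigma>\<^sub>k, \<dots>, \<sigma>\<^sub>n\<close>, and one step of the recursion is the map
  \<open>N (Y + N T) / (N + Y T)\<close> with \<open>T = tanh (d\<^sub>k u\<^sub>k)\<close>. Differentiating it gives
  \<open>N' a\<^sub>k + N [(1 - T\<^sup>2)(N Y' - Y N') + T' (N\<^sup>2 - Y\<^sup>2)] / (N + Y T)\<^sup>2\<close>, and since
  \<open>T' = d\<^sub>k u' (1 - T\<^sup>2)\<close> and \<open>1 - T\<^sup>2 = 1 / cosh\<^sup>2\<close>, the whole bracket comes with the factor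
  \<open>b\<^sub>k\<close>. For \<open>j > k\<close> only \<open>Y\<^sub>k\<^sub>+\<^sub>1\<close> moves; for \<open>j = k\<close> only \<open>N\<^sub>k\<close> and \<open>u\<^sub>k\<close> move,
  with \<open>\<partial>u\<^sub>k/\<partial>\<sigma>\<^sub>k = i\<mu>\<^sub>k\<omega> / (2u\<^sub>k)\<close> and \<open>\<partial>N\<^sub>k/\<partial>\<sigma>\<^sub>k = 1 / (2u\<^sub>k)\<close>.
\<close>

lemma has_vector_derivative_quotient:
  fixes f g :: "real \<Rightarrow> 'a::real_normed_field"
  assumes "(f has_vector_derivative f') (at x)" "(g has_vector_derivative g') (at x)" "g x \<noteq> 0"
  shows "((\<lambda>t. f t / g t) has_vector_derivative (f' * g x - f x * g') / (g x)\<^sup>2) (at x)"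
  using has_derivative_divide'[OF assms(1,2)[unfolded has_vector_derivative_def] assms(3)]
  unfolding has_vector_derivative_def
  by (rule has_derivative_eq_rhs)
     (use assms(3) in \<open>auto simp: fun_eq_iff scaleR_conv_of_real field_simps power2_eq_square\<close>)

lemma has_vector_derivative_tanh:
  fixes f :: "real \<Rightarrow> 'a::{banach, real_normed_field}"
  assumes "(f has_vector_derivative f') (at x)" "cosh (f x) \<noteq> 0"
  shows "((\<lambda>t. tanh (f t)) has_vector_derivative f' * (1 - (tanh (f x))\<^sup>2)) (at x)"
proof -
  have "(tanh has_field_derivative 1 - (tanh (f x))\<^sup>2) (at (f x))"
    using has_field_derivative_tanh[of "\<lambda>z. z" "f x" 1 UNIV] assms(2) by simp
  from field_vector_diff_chain_at[OF assms(1) this] show ?thesis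
    by (simp add: o_def)
qed

lemma one_minus_tanh_squared:
  fixes z :: "'a::{banach, real_normed_field}"
  assumes "cosh z \<noteq> 0"
  shows "1 - (tanh z)\<^sup>2 = 1 / (cosh z)\<^sup>2"
proof -
  have "1 - (tanh z)\<^sup>2 = ((cosh z)\<^sup>2 - (sinh z)\<^sup>2) / (cosh z)\<^sup>2"
    using assms by (simp add: tanh_def power_divide diff_divide_distrib)
  then show ?thesis
    by (simp add: hyperbolic_pythagoras)
qed

lemma layer_map_has_vector_derivative:
  fixes N T Y :: "real \<Rightarrow> 'a::real_normed_field"
  assumes "(N has_vector_derivative N') (at x)" "(T has_vector_derivative T') (at x)"
    "(Y has_vector_derivative Y') (at x)" and D: "N x + Y x * T x \<noteq> 0"
  shows "((\<lambda>t. N t * ((Y t + N t * T t) / (N t + Y t * T t))) has_vector_derivative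
      N' * ((Y x + N x * T x) / (N x + Y x * T x))
      + N x * ((1 - (T x)\<^sup>2) * (N x * Y' - Y x * N') + T' * ((N x)\<^sup>2 - (Y x)\<^sup>2))
          / (N x + Y x * T x)\<^sup>2) (at x)"
proof -
  have num: "((\<lambda>t. Y t + N t * T t) has_vector_derivative Y' + (N x * T' + N' * T x)) (at x)"
    and den: "((\<lambda>t. N t + Y t * T t) has_vector_derivative N' + (Y x * T' + Y' * T x)) (at x)"
    using assms(1-3) by (auto intro!: derivative_intros)
  show ?thesis
    using has_vector_derivative_mult[OF assms(1) has_vector_derivative_quotient[OF num den D]]
    by (rule has_vector_derivative_eq_rhs) (simp add: algebra_simps power2_eq_square)
qed

lemma Yk_last: "n \<le> k \<Longrightarrow> Yk lam w d mu n s k = Nk lam w mu s n"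
  by (subst Yk.simps) simp

lemma Yk_step:
  "k < n \<Longrightarrow> Yk lam w d mu n s k =
     Nk lam w mu s k *
       ((Yk lam w d mu n s (Suc k) + Nk lam w mu s k * tanh (complex_of_real (d k) * uk lam w mu s k))
        / (Nk lam w mu s k + Yk lam w d mu n s (Suc k) * tanh (complex_of_real (d k) * uk lam w mu s k)))"
  by (subst Yk.simps) (simp add: Let_def)

lemma Yk_cong:
  assumes "k \<le> n" "\<And>i. k \<le> i \<Longrightarrow> s' i = s i"
  shows "Yk lam w d mu n s' k = Yk lam w d mu n s k"
  using assms
proof (induction k rule: inc_induct)
  case base
  then show ?case by (simp add: Yk_last Nk_def uk_def)
next
  case (step k)
  then show ?case by (simp add: Yk_step Nk_def uk_def)
qed

lemma uk_radicand_notin_nonpos_Reals: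
  assumes "s k * mu k * w \<noteq> 0"
  shows "complex_of_real (lam ^ 2) + \<i> * complex_of_real (s k * mu k * w) \<notin> \<real>\<^sub>\<le>\<^sub>0"
proof -
  have "Im (complex_of_real (lam ^ 2) + \<i> * complex_of_real (s k * mu k * w)) \<noteq> 0"
    using assms by (simp del: of_real_mult)
  then show ?thesis
    using complex_is_Real_iff nonpos_Reals_subset_Reals by blast
qed

lemma uk_nonzero: "s k * mu k * w \<noteq> 0 \<Longrightarrow> uk lam w mu s k \<noteq> 0"
  unfolding uk_def by (metis csqrt_eq_0 nonpos_Reals_zero_I uk_radicand_notin_nonpos_Reals)

lemma uk_has_vector_derivative:
  assumes "s k * mu k * w \<noteq> 0"
  shows "((\<lambda>t. uk lam w mu (s(k := t)) k) has_vector_derivative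
           \<i> * complex_of_real (mu k * w) / (2 * uk lam w mu s k)) (at (s k))"
proof -
  have radicand: "complex_of_real (lam ^ 2) + \<i> * complex_of_real (s k * mu k * w) \<notin> \<real>\<^sub>\<le>\<^sub>0"
    using assms by (rule uk_radicand_notin_nonpos_Reals)
  define g where "g z = csqrt (complex_of_real (lam ^ 2) + \<i> * (z * complex_of_real (mu k * w)))" for z
  have "(g has_field_derivative \<i> * complex_of_real (mu k * w) / (2 * uk lam w mu s k))
          (at (complex_of_real (s k)))"
    unfolding g_def using radicand
    by (auto intro!: derivative_eq_intros simp: uk_def ac_simps)
  moreover have "(\<lambda>t. uk lam w mu (s(k := t)) k) = (\<lambda>t. g (complex_of_real t))"
    by (simp add: fun_eq_iff uk_def g_def mult.assoc)
  ultimately show ?thesis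
    by (simp add: has_vector_derivative_real_field)
qed

lemma Nk_has_vector_derivative:
  assumes "s k * mu k * w \<noteq> 0"
  shows "((\<lambda>t. Nk lam w mu (s(k := t)) k) has_vector_derivative 1 / (2 * uk lam w mu s k)) (at (s k))"
proof -
  have "((\<lambda>t. uk lam w mu (s(k := t)) k / (\<i> * complex_of_real (mu k * w))) has_vector_derivative
           \<i> * complex_of_real (mu k * w) / (2 * uk lam w mu s k) / (\<i> * complex_of_real (mu k * w)))
         (at (s k))"
    using assms by (intro has_vector_derivative_divide uk_has_vector_derivative)
  moreover have "uk lam w mu s k \<noteq> 0"
    using assms by (rule uk_nonzero)
  moreover have "\<i> * complex_of_real (mu k * w) \<noteq> 0"
    using assms by (simp del: of_real_mult)
  ultimately show ?thesis
    unfolding Nk_def by simp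
qed

lemma Yk_step_has_vector_derivative:
  assumes "m < n"
    and Y: "((\<lambda>t. Yk lam w d mu n (s(j := t)) (Suc m)) has_vector_derivative Y') (at (s j))"
    and N: "((\<lambda>t. Nk lam w mu (s(j := t)) m) has_vector_derivative N') (at (s j))"
    and u: "((\<lambda>t. uk lam w mu (s(j := t)) m) has_vector_derivative u') (at (s j))"
    and D: "Nk lam w mu s m + Yk lam w d mu n s (Suc m) * tanh (complex_of_real (d m) * uk lam w mu s m) \<noteq> 0"
    and C: "cosh (complex_of_real (d m) * uk lam w mu s m) \<noteq> 0"
  shows "((\<lambda>t. Yk lam w d mu n (s(j := t)) m) has_vector_derivative
           N' * ak lam w d mu n s m
           + bk lam w d mu n s m * Nk lam w mu s m *
             (Nk lam w mu s m * Y' - Yk lam w d mu n s (Suc m) * N'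
              + complex_of_real (d m) * u' * ((Nk lam w mu s m)\<^sup>2 - (Yk lam w d mu n s (Suc m))\<^sup>2)))
         (at (s j))"
proof -
  define N0 where "N0 = Nk lam w mu s m"
  define Y0 where "Y0 = Yk lam w d mu n s (Suc m)"
  define x0 where "x0 = complex_of_real (d m) * uk lam w mu s m"
  define D0 where "D0 = N0 + Y0 * tanh x0"
  have "D0 \<noteq> 0" "cosh x0 \<noteq> 0"
    using D C by (simp_all add: D0_def N0_def Y0_def x0_def)
  have T: "((\<lambda>t. tanh (complex_of_real (d m) * uk lam w mu (s(j := t)) m)) has_vector_derivative
             complex_of_real (d m) * u' * (1 - (tanh x0)\<^sup>2)) (at (s j))"
    using has_vector_derivative_tanh[OF has_vector_derivative_mult_right[OF u]] C by (simp add: x0_def)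
  have rhs: "N' * ((Y0 + N0 * tanh x0) / D0)
      + N0 * ((1 - (tanh x0)\<^sup>2) * (N0 * Y' - Y0 * N') + complex_of_real (d m) * u' * (1 - (tanh x0)\<^sup>2) * (N0\<^sup>2 - Y0\<^sup>2))
          / D0\<^sup>2
    = N' * ak lam w d mu n s m + bk lam w d mu n s m * N0 *
        (N0 * Y' - Y0 * N' + complex_of_real (d m) * u' * (N0\<^sup>2 - Y0\<^sup>2))"
  proof -
    have ak: "ak lam w d mu n s m = (Y0 + N0 * tanh x0) / D0"
      and bk: "bk lam w d mu n s m = 1 / (D0\<^sup>2 * (cosh x0)\<^sup>2)"
      by (simp_all add: ak_def bk_def Let_def D0_def N0_def Y0_def x0_def)
    show ?thesis
      unfolding ak bk one_minus_tanh_squared[OF \<open>cosh x0 \<noteq> 0\<close>]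
      using \<open>D0 \<noteq> 0\<close> \<open>cosh x0 \<noteq> 0\<close> by (simp add: field_simps)
  qed
  show ?thesis
    unfolding Yk_step[OF \<open>m < n\<close>]
    by (rule has_vector_derivative_eq_rhs[OF layer_map_has_vector_derivative[OF N T Y]])
       (use D rhs in \<open>simp_all add: D0_def N0_def Y0_def x0_def\<close>)
qed

function dYk :: "real \<Rightarrow> real \<Rightarrow> (nat \<Rightarrow> real) \<Rightarrow> (nat \<Rightarrow> real) \<Rightarrow> nat \<Rightarrow> (nat \<Rightarrow> real) \<Rightarrow> nat \<Rightarrow> nat \<Rightarrow> complex" where
  "dYk lam w d mu n s k j =
     (if n \<le> k then (if j = n then 1 / (2 * uk lam w mu s n) else 0)
      else if k < j then (Nk lam w mu s k)\<^sup>2 * bk lam w d mu n s k * dYk lam w d mu n s (Suc k) j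
      else if j = k then ak lam w d mu n s k / (2 * uk lam w mu s k)
        + bk lam w d mu n s k / 2 *
          ((Nk lam w mu s k)\<^sup>2 * complex_of_real (d k)
           - Yk lam w d mu n s (Suc k) *
             (complex_of_real (d k) * Yk lam w d mu n s (Suc k) + 1 / (\<i> * complex_of_real (mu k * w))))
      else 0)"
  by pat_completeness auto
termination
  by (relation "Wellfounded.measure (\<lambda>(lam, w, d, mu, n, s, k, j). n - k)") auto

declare dYk.simps [simp del]

lemma dYk_last: "n \<le> k \<Longrightarrow> dYk lam w d mu n s k j = (if j = n then 1 / (2 * uk lam w mu s n) else 0)"
  by (subst dYk.simps) simp

lemma dYk_later:
  "k < n \<Longrightarrow> k < j \<Longrightarrow>
     dYk lam w d mu n s k j = (Nk lam w mu s k)\<^sup>2 * bk lam w d mu n s k * dYk lam w d mu n s (Suc k) j"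
  by (subst dYk.simps) simp

lemma dYk_diag:
  "k < n \<Longrightarrow> dYk lam w d mu n s k k = ak lam w d mu n s k / (2 * uk lam w mu s k)
        + bk lam w d mu n s k / 2 *
          ((Nk lam w mu s k)\<^sup>2 * complex_of_real (d k)
           - Yk lam w d mu n s (Suc k) *
             (complex_of_real (d k) * Yk lam w d mu n s (Suc k) + 1 / (\<i> * complex_of_real (mu k * w))))"
  by (subst dYk.simps) simp

lemma dYk_earlier: "k < n \<Longrightarrow> j < k \<Longrightarrow> dYk lam w d mu n s k j = 0"
  by (subst dYk.simps) simp

lemma Yk_has_vector_derivative:
  assumes pos: "\<forall>k\<in>{1..n}. s k * mu k * w \<noteq> 0"
    and den: "\<forall>k\<in>{1..<n}.
           Nk lam w mu s k + Yk lam w d mu n s (Suc k) * tanh (complex_of_real (d k) * uk lam w mu s k) \<noteq> 0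
         \<and> cosh (complex_of_real (d k) * uk lam w mu s k) \<noteq> 0"
    and j: "j \<in> {1..n}" and k: "1 \<le> k" "k \<le> n"
  shows "((\<lambda>t. Yk lam w d mu n (s(j := t)) k) has_vector_derivative dYk lam w d mu n s k j) (at (s j))"
  using \<open>k \<le> n\<close>
proof (induction k rule: inc_induct)
  case base
  have Yk_eq: "(\<lambda>t. Yk lam w d mu n (s(j := t)) n) = (\<lambda>t. Nk lam w mu (s(j := t)) n)"
    by (simp add: Yk_last)
  show ?case
  proof (cases "j = n")
    case True
    have "s n * mu n * w \<noteq> 0"
      using pos j by simp
    then have "((\<lambda>t. Nk lam w mu (s(n := t)) n) has_vector_derivative 1 / (2 * uk lam w mu s n)) (at (s n))"
      by (rule Nk_has_vector_derivative)
    with True show ?thesis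
      unfolding Yk_eq by (simp add: dYk_last)
  next
    case False
    then show ?thesis
      unfolding Yk_eq by (simp add: dYk_last Nk_def uk_def)
  qed
next
  case (step m)
  with k have D: "Nk lam w mu s m + Yk lam w d mu n s (Suc m) * tanh (complex_of_real (d m) * uk lam w mu s m) \<noteq> 0"
    and C: "cosh (complex_of_real (d m) * uk lam w mu s m) \<noteq> 0"
    using den by auto
  consider "j < m" | "m < j" | "j = m" by linarith
  then show ?case
  proof cases
    case 1
    then have Yk_eq: "(\<lambda>t. Yk lam w d mu n (s(j := t)) m) = (\<lambda>t. Yk lam w d mu n s m)"
      using step.hyps by (intro ext Yk_cong) auto
    from 1 step.hyps show ?thesis
      unfolding Yk_eq by (simp add: dYk_earlier)
  next
    case 2
    have "((\<lambda>t. Nk lam w mu (s(j := t)) m) has_vector_derivative 0) (at (s j))"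
      and "((\<lambda>t. uk lam w mu (s(j := t)) m) has_vector_derivative 0) (at (s j))"
      using 2 by (simp_all add: Nk_def uk_def)
    from Yk_step_has_vector_derivative[OF step.hyps(2) step.IH this D C]
    show ?thesis
      by (rule has_vector_derivative_eq_rhs) (simp add: dYk_later[OF step.hyps(2) 2] power2_eq_square)
  next
    case 3
    have "m \<in> {1..n}"
      using step.hyps k by simp
    with pos have pos_m: "s m * mu m * w \<noteq> 0"
      by blast
    define c where "c = \<i> * complex_of_real (mu m * w)"
    have "c \<noteq> 0" using pos_m by (simp add: c_def del: of_real_mult)
    have "uk lam w mu s m \<noteq> 0" using pos_m by (rule uk_nonzero)
    have "(\<lambda>t. Yk lam w d mu n (s(m := t)) (Suc m)) = (\<lambda>t. Yk lam w d mu n s (Suc m))"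
      using step.hyps by (intro ext Yk_cong) auto
    then have "((\<lambda>t. Yk lam w d mu n (s(m := t)) (Suc m)) has_vector_derivative 0) (at (s m))"
      by simp
    moreover have "((\<lambda>t. Nk lam w mu (s(m := t)) m) has_vector_derivative 1 / (2 * uk lam w mu s m)) (at (s m))"
      using pos_m by (rule Nk_has_vector_derivative)
    moreover have "((\<lambda>t. uk lam w mu (s(m := t)) m) has_vector_derivative c / (2 * uk lam w mu s m)) (at (s m))"
      unfolding c_def using pos_m by (rule uk_has_vector_derivative)
    ultimately have deriv: "((\<lambda>t. Yk lam w d mu n (s(m := t)) m) has_vector_derivative
        1 / (2 * uk lam w mu s m) * ak lam w d mu n s m
        + bk lam w d mu n s m * Nk lam w mu s m *
          (Nk lam w mu s m * 0 - Yk lam w d mu n s (Suc m) * (1 / (2 * uk lam w mu s m))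
           + complex_of_real (d m) * (c / (2 * uk lam w mu s m))
             * ((Nk lam w mu s m)\<^sup>2 - (Yk lam w d mu n s (Suc m))\<^sup>2))) (at (s m))"
      using step.hyps(2) D C by (intro Yk_step_has_vector_derivative)
    have alg: "1 / (2 * u) * a + b * (u / c) * ((u / c) * 0 - Y * (1 / (2 * u))
          + e * (c / (2 * u)) * ((u / c)\<^sup>2 - Y\<^sup>2))
        = a / (2 * u) + b / 2 * ((u / c)\<^sup>2 * e - Y * (e * Y + 1 / c))"
      if "u \<noteq> 0" for u a b Y e :: complex
      using that \<open>c \<noteq> 0\<close> by (simp add: field_simps power2_eq_square)
    have N_eq: "Nk lam w mu s m = uk lam w mu s m / c"
      by (simp add: Nk_def c_def)
    have "1 / (2 * uk lam w mu s m) * ak lam w d mu n s m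
        + bk lam w d mu n s m * Nk lam w mu s m *
          (Nk lam w mu s m * 0 - Yk lam w d mu n s (Suc m) * (1 / (2 * uk lam w mu s m))
           + complex_of_real (d m) * (c / (2 * uk lam w mu s m))
             * ((Nk lam w mu s m)\<^sup>2 - (Yk lam w d mu n s (Suc m))\<^sup>2))
        = dYk lam w d mu n s m m"
      unfolding dYk_diag[OF step.hyps(2)] c_def[symmetric] N_eq
      using \<open>uk lam w mu s m \<noteq> 0\<close> by (rule alg)
    with deriv show ?thesis
      unfolding 3 by (rule has_vector_derivative_eq_rhs)
  qed
qed

theorem lemma1:
  fixes lam w :: real and n :: nat and d mu sigma :: "nat \<Rightarrow> real"
  assumes "lam \<ge> 0" and "w > 0" and "n \<ge> 1"
    and "\<forall>k\<in>{1..<n}. d k > 0"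
    and "\<forall>k\<in>{1..n}. mu k > 0"
    and "\<forall>k\<in>{1..n}. sigma k > 0"
    and "\<forall>k\<in>{1..<n}.
           Nk lam w mu sigma k + Yk lam w d mu n sigma (Suc k)
             * tanh (complex_of_real (d k) * uk lam w mu sigma k) \<noteq> 0
         \<and> cosh (complex_of_real (d k) * uk lam w mu sigma k) \<noteq> 0"
  shows "\<exists>Y' :: nat \<Rightarrow> nat \<Rightarrow> complex.
    (\<forall>k\<in>{1..n}. \<forall>j\<in>{1..n}.
       ((\<lambda>t. Yk lam w d mu n (sigma(j := t)) k) has_vector_derivative Y' k j) (at (sigma j)))
    \<and> Y' n n = 1 / (2 * uk lam w mu sigma n)
    \<and> (\<forall>j\<in>{1..<n}. Y' n j = 0)
    \<and> (\<forall>k\<in>{1..<n}.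
         (\<forall>j\<in>{k<..n}. Y' k j = (Nk lam w mu sigma k)\<^sup>2 * bk lam w d mu n sigma k * Y' (Suc k) j)
       \<and> Y' k k = ak lam w d mu n sigma k / (2 * uk lam w mu sigma k)
           + bk lam w d mu n sigma k / 2 *
             ((Nk lam w mu sigma k)\<^sup>2 * complex_of_real (d k)
              - Yk lam w d mu n sigma (Suc k) *
                (complex_of_real (d k) * Yk lam w d mu n sigma (Suc k)
                 + 1 / (\<i> * complex_of_real (mu k * w))))
       \<and> (\<forall>j\<in>{1..<k}. Y' k j = 0))"
proof (intro exI[of _ "dYk lam w d mu n sigma"] conjI ballI)
  have "\<forall>k\<in>{1..n}. sigma k * mu k * w \<noteq> 0"
    using assms(2,5,6) by (simp add: less_imp_neq[symmetric])
  then show "((\<lambda>t. Yk lam w d mu n (sigma(j := t)) k) has_vector_derivative dYk lam w d mu n sigma k j)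
      (at (sigma j))" if "k \<in> {1..n}" "j \<in> {1..n}" for k j
    using that assms(7) by (intro Yk_has_vector_derivative) auto
qed (simp_all add: dYk_last dYk_later dYk_diag dYk_earlier)

end
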